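(* Let $S_A>0$, $c_{\mathrm{TX}}>0$, $\phi>0$, $\theta=\phi/c_{\mathrm{TX}}$, $B\geq1$ an integer, and $0<\lambda<\lambda_{\mathrm{th}}=\left(\sqrt{1+1/S_A}+\sqrt{\theta}\right)^{-2}$. Let $$v_{\mathrm{th}}(\lambda,0)=\sqrt{\lambda\theta}+\frac{\lambda}{2}+\sqrt{\lambda}\sqrt{\sqrt{\lambda\theta}+\frac{\lambda}{4}+\frac{1}{S_A}}.$$ For $V_k\in(0,1]$, $\zeta\geq0$, $S_M\geq0$, let $\rho(\zeta)=\zeta e^{-\zeta}$, $\mathcal B_B(r;\rho)=\binom{B}{r}\rho^r(1-\rho)^{B-r}$, $\hat\nu(V,\Lambda)=V/(1+V\Lambda)$, and $$f(\zeta,S_M,V_k)=\sum_{r=0}^B\mathcal B_B(r;\rho(\zeta))\,\hat\nu\left(V_k,\frac{rS_AS_M}{S_A+S_M}\right)+\lambda\zeta B(1+\theta S_M).$$ The myopic policy $(\zeta^{(MP)}(V_k),S_M^{(MP)}(V_k))$ is a minimizer of $f(\cdot,\cdot,V_k)$ over $\zeta\geq0$, $S_M\geq0$ (with the convention $S_M=0$ when $\zeta=0$). Then: (i) if $V_k\leq v_{\mathrm{th}}(\lambda,0)$, then $(\zeta^{(MP)}(V_k),S_M^{(MP)}(V_k))=(0,0)$; (ii) otherwise, $(\zeta,S_M)=(\zeta^{(MP)}(V_k),S_M^{(MP)}(V_k))$ satisfies $\zeta\in(0,1)$, $S_M>0$, and simultaneously solves $h(S_M,\zeta,V_k)=0$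 and $g(S_M,\zeta,V_k)=0$, where, with $R\sim\mathcal B_B(\cdot;\rho(\zeta))$, $$h(S_M,\zeta,V_k)=-\mathbb E\left[\hat\nu\left(V_k,\frac{RS_AS_M}{S_A+S_M}\right)^2\frac{RS_A^2}{(S_A+S_M)^2}\right]+\lambda\zeta B\theta,$$ $$g(S_M,\zeta,V_k)=\mathbb E\left[\hat\nu\left(V_k,\frac{RS_AS_M}{S_A+S_M}\right)\frac{R-\rho(\zeta)B}{\rho(\zeta)(1-\rho(\zeta))}\right]+\lambda B\frac{e^{\zeta}}{1-\zeta}(1+\theta S_M).$$ Moreover, $$0<\zeta^{(MP)}(V_k)<\min\left\{1,2\ln\left(\frac{V_k}{\sqrt{\lambda\theta}}\right)\right\}$$ and $S_{M,\mathrm{th}}^{\min}\leq S_M^{(MP)}(V_k)\leq S_{M,\mathrm{th}}^{\max}$, where $$S_{M,\mathrm{th}}^{\min}=\frac{-\lambda\theta S_A-\lambda(1+V_kS_A)+V_k^2S_A-\sqrt{[(\lambda\theta+V_k^2)S_A-\lambda(1+V_kS_A)]^2-4\lambda\theta V_k^2S_A^2}}{2\lambda\theta(1+V_kS_A)},$$ $$S_{M,\mathrm{th}}^{\max}=\min\left\{\frac{-\lambda\theta S_A-\lambda(1+V_kS_A)+V_k^2S_A}{2\lambda\theta(1+V_kS_A)}+\frac{\sqrt{[(\lambda\theta+V_k^2)-\lambda(1/S_A+V_k)]^2-4\lambda\theta V_k^2}}{2\lambda\theta(1/S_A+V_k)},\ S_A\left(\frac{V_k}{\sqrt{\lambda\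theta}}-1\right)\right\}.$$
   Context: Decentralized sensing scheme in the large-network limit: $V_k$ is the fusion center's prior variance; each of infinitely many sensors activates with a probability such that the normalized activation probability per channel is $\zeta$, chooses one of $B$ channels uniformly (collision channel), and, if active, measures with local measurement SNR $S_M$ and ambient SNR $S_A$; the number $R$ of successful transmissions is Binomial with $B$ trials and success probability $\rho(\zeta)=\zeta e^{-\zeta}$, and the aggregate SNR is $RS_AS_M/(S_A+S_M)$. The cost term $\lambda\zeta B(1+\theta S_M)$ is the normalized expected sensing-transmission cost weighted by the Lagrange multiplier $\lambda$. *)

theory Defs
  imports Complex_Main
begin

definition rho :: "real \<Rightarrow> real" where
  "rho z = z * exp (- z)"

definition binom_B :: "nat \<Rightarrow> nat \<Rightarrow> real \<Rightarrow> real" where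
  "binom_B B r p = real (B choose r) * p ^ r * (1 - p) ^ (B - r)"

definition nu_hat :: "real \<Rightarrow> real \<Rightarrow> real" where
  "nu_hat V L = V / (1 + V * L)"

definition agg_snr :: "real \<Rightarrow> real \<Rightarrow> nat \<Rightarrow> real" where
  "agg_snr SA SM r = real r * SA * SM / (SA + SM)"

definition f_obj :: "real \<Rightarrow> real \<Rightarrow> real \<Rightarrow> nat \<Rightarrow> real \<Rightarrow> real \<Rightarrow> real \<Rightarrow> real" where
  "f_obj lam theta SA B zeta SM V =
     (\<Sum>r = 0..B. binom_B B r (rho zeta) * nu_hat V (agg_snr SA SM r))
     + lam * zeta * real B * (1 + theta * SM)"

definition h_fun :: "real \<Rightarrow> real \<Rightarrow> real \<Rightarrow> nat \<Rightarrow> real \<Rightarrow> real \<Rightarrow> real \<Rightarrow> real" where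
  "h_fun lam theta SA B SM zeta V =
     - (\<Sum>r = 0..B. binom_B B r (rho zeta) *
          ((nu_hat V (agg_snr SA SM r)) ^ 2 * (real r * SA ^ 2 / (SA + SM) ^ 2)))
     + lam * zeta * real B * theta"

definition g_fun :: "real \<Rightarrow> real \<Rightarrow> real \<Rightarrow> nat \<Rightarrow> real \<Rightarrow> real \<Rightarrow> real \<Rightarrow> real" where
  "g_fun lam theta SA B SM zeta V =
     (\<Sum>r = 0..B. binom_B B r (rho zeta) *
          (nu_hat V (agg_snr SA SM r) *
           ((real r - rho zeta * real B) / (rho zeta * (1 - rho zeta)))))
     + lam * real B * (exp zeta / (1 - zeta)) * (1 + theta * SM)"

definition lam_th :: "real \<Rightarrow> real \<Rightarrow> real" where
  "lam_th theta SA = 1 / (sqrt (1 + 1 / SA) + sqrt theta) ^ 2"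

definition v_th :: "real \<Rightarrow> real \<Rightarrow> real \<Rightarrow> real" where
  "v_th lam theta SA =
     sqrt (lam * theta) + lam / 2 + sqrt lam * sqrt (sqrt (lam * theta) + lam / 4 + 1 / SA)"

definition SM_th_min :: "real \<Rightarrow> real \<Rightarrow> real \<Rightarrow> real \<Rightarrow> real" where
  "SM_th_min lam theta SA V =
     (- lam * theta * SA - lam * (1 + V * SA) + V ^ 2 * SA
      - sqrt (((lam * theta + V ^ 2) * SA - lam * (1 + V * SA)) ^ 2
              - 4 * lam * theta * V ^ 2 * SA ^ 2))
     / (2 * lam * theta * (1 + V * SA))"

definition SM_th_max :: "real \<Rightarrow> real \<Rightarrow> real \<Rightarrow> real \<Rightarrow> real" where
  "SM_th_max lam theta SA V =
     min ((- lam * theta * SA - lam * (1 + V * SA) + V ^ 2 * SA) / (2 * lam * theta * (1 + V * SA))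
          + sqrt (((lam * theta + V ^ 2) - lam * (1 / SA + V)) ^ 2 - 4 * lam * theta * V ^ 2)
            / (2 * lam * theta * (1 / SA + V)))
         (SA * (V / sqrt (lam * theta) - 1))"

end

theory Submission
  imports Defs
begin

text \<open>
  Write \<open>\<Delta>(S) = V - \<nu>(V, S\<^sub>AS/(S\<^sub>A+S)) = V\<^sup>2/(1/S + 1/S\<^sub>A + V)\<close> for the variance
  reduction achieved by a single successful report. Since \<open>r \<mapsto> V - \<nu>(V, r a)\<close> is
  subadditive and \<open>\<rho>(\<zeta>) < \<zeta>\<close>, every \<open>\<zeta> > 0\<close> gives
  \<open>f(\<zeta>, S) > V - B\<zeta>(\<Delta>(S) - \<lambda>(1 + \<theta>S))\<close>, while \<open>f(0, S) = V\<close>. By AM-GM,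
  \<open>\<Delta>(S) \<le> \<lambda>(1 + \<theta>S)\<close> for all \<open>S\<close> exactly when \<open>V \<le> \<surd>\<lambda>(\<surd>\<theta> + \<surd>(1/S\<^sub>A + V))\<close>, and
  this is equivalent to \<open>V \<le> v\<^sub>t\<^sub>h\<close>. So below the threshold sensing never pays off;
  above it some \<open>S\<close> with \<open>\<Delta>(S) > \<lambda>(1 + \<theta>S)\<close> makes small \<open>\<zeta>\<close> profitable, hence
  the minimizer is interior in \<open>S\<^sub>M\<close>, and interior in \<open>\<zeta>\<close> because \<open>\<rho>\<close> takes all its
  values on \<open>[0, 1]\<close>. The equations \<open>h = g = 0\<close> are the stationarity conditions;
  the inequality \<open>\<Delta>(S\<^sub>M) > \<lambda>(1 + \<theta>S\<^sub>M)\<close> is a quadratic inequality in \<open>S\<^sub>M\<close> whose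
  roots are \<open>S\<^sub>M\<^sub>,\<^sub>t\<^sub>h\<^sup>m\<^sup>i\<^sup>n\<close> and the first term of \<open>S\<^sub>M\<^sub>,\<^sub>t\<^sub>h\<^sup>m\<^sup>a\<^sup>x\<close>, and bounding \<open>\<nu>\<close> by \<open>V\<close> in
  \<open>h = 0\<close> gives \<open>e\<^sup>\<zeta>\<lambda>\<theta> \<le> (V S\<^sub>A/(S\<^sub>A + S\<^sub>M))\<^sup>2\<close>, which yields the remaining bounds.
\<close>

lemma binom_B_nonneg: "0 \<le> p \<Longrightarrow> p \<le> 1 \<Longrightarrow> 0 \<le> binom_B B r p"
  unfolding binom_B_def by simp

lemma binom_B_zero: "binom_B B r 0 = (if r = 0 then 1 else 0)"
  unfolding binom_B_def by simp

lemma sum_binom_B: "(\<Sum>r = 0..B. binom_B B r p) = 1"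
  using binomial_ring[of p "1 - p" B] unfolding binom_B_def by (simp add: atLeast0AtMost)

lemma sum_binom_B_diff:
  "(\<Sum>r = 0..B. binom_B B r p * (c - g r)) = c - (\<Sum>r = 0..B. binom_B B r p * g r)"
  by (simp add: right_diff_distrib sum_subtractf sum_binom_B flip: sum_distrib_right)

lemma sum_binom_B_mult_of_nat: "(\<Sum>r = 0..B. binom_B B r p * real r) = real B * p"
proof (cases B)
  case 0
  then show ?thesis by (simp add: binom_B_def)
next
  case (Suc n)
  have shift: "binom_B (Suc n) (Suc k) p * real (Suc k) = real (Suc n) * p * binom_B n k p" for k
  proof -
    have "binom_B (Suc n) (Suc k) p * real (Suc k)
        = (real (Suc k) * real (Suc n choose Suc k)) * p * p ^ k * (1 - p) ^ (n - k)"
      unfolding binom_B_def by simp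
    also have "real (Suc k) * real (Suc n choose Suc k) = real (Suc n) * real (n choose k)"
      using Suc_times_binomial[of k n] by (metis of_nat_mult)
    finally show ?thesis unfolding binom_B_def by simp
  qed
  have "(\<Sum>r = 0..Suc n. binom_B (Suc n) r p * real r)
      = (\<Sum>k = 0..n. binom_B (Suc n) (Suc k) p * real (Suc k))"
    by (simp only: sum.atLeast0_atMost_Suc_shift) simp
  also have "\<dots> = real (Suc n) * p * (\<Sum>k = 0..n. binom_B n k p)"
    by (simp only: shift sum_distrib_left)
  finally show ?thesis using Suc by (simp add: sum_binom_B)
qed

lemma of_nat_mult_power_pred:
  fixes x :: "'a :: field"
  shows "x \<noteq> 0 \<Longrightarrow> of_nat n * x ^ (n - 1) = of_nat n * x ^ n / x"
  by (cases n) auto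

lemma binom_B_has_real_derivative:
  assumes "0 < p" "p < 1" "r \<le> B"
  shows "(binom_B B r has_real_derivative
           binom_B B r p * ((real r - p * real B) / (p * (1 - p)))) (at p)"
proof -
  have "(binom_B B r has_real_derivative
        real (B choose r) * (real r * p ^ (r - 1) * (1 - p) ^ (B - r)
          - p ^ r * (real (B - r) * (1 - p) ^ (B - r - 1)))) (at p)"
    unfolding binom_B_def [abs_def]
    by (rule derivative_eq_intros refl | simp add: algebra_simps)+
  moreover have "real (B choose r) * (real r * p ^ (r - 1) * (1 - p) ^ (B - r)
          - p ^ r * (real (B - r) * (1 - p) ^ (B - r - 1)))
      = binom_B B r p * ((real r - p * real B) / (p * (1 - p)))"
  proof -
    have e1: "real r * p ^ (r - 1) = real r * p ^ r / p"
      and e2: "real (B - r) * (1 - p) ^ (B - r - 1) = real (B - r) * (1 - p) ^ (B - r) / (1 - p)"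
      using assms by (simp_all only: of_nat_mult_power_pred)
    show ?thesis
      using assms unfolding e1 e2 binom_B_def by (simp add: of_nat_diff field_simps)
  qed
  ultimately show ?thesis by simp
qed

lemma rho_zero [simp]: "rho 0 = 0"
  unfolding rho_def by simp

lemma rho_nonneg: "z \<ge> 0 \<Longrightarrow> rho z \<ge> 0"
  unfolding rho_def by simp

lemma rho_pos: "z > 0 \<Longrightarrow> rho z > 0"
  unfolding rho_def by simp

lemma rho_less: "z > 0 \<Longrightarrow> rho z < z"
  unfolding rho_def by simp

lemma rho_le_rho_one: "rho z \<le> rho 1"
proof -
  have "z * exp (- z) \<le> exp (z - 1) * exp (- z)"
    using exp_ge_add_one_self[of "z - 1"] by (intro mult_right_mono) auto
  then show ?thesis unfolding rho_def by (simp flip: exp_add)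
qed

lemma rho_less_one: "rho z < 1"
proof -
  have "rho 1 < 1" by (simp add: rho_def)
  then show ?thesis using rho_le_rho_one[of z] by linarith
qed

lemma rho_has_real_derivative: "(rho has_real_derivative exp (- z) * (1 - z)) (at z)"
  unfolding rho_def [abs_def]
  by (rule derivative_eq_intros refl | simp add: algebra_simps)+

lemma nu_hat_le: "V > 0 \<Longrightarrow> L \<ge> 0 \<Longrightarrow> nu_hat V L \<le> V"
  unfolding nu_hat_def by (simp add: divide_le_eq)

lemma nu_hat_nonneg: "V > 0 \<Longrightarrow> L \<ge> 0 \<Longrightarrow> nu_hat V L \<ge> 0"
  unfolding nu_hat_def by simp

lemma agg_snr_nonneg: "SA > 0 \<Longrightarrow> S \<ge> 0 \<Longrightarrow> agg_snr SA S r \<ge> 0"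
  unfolding agg_snr_def by simp

lemma agg_snr_eq_mult: "agg_snr SA S r = real r * agg_snr SA S 1"
  unfolding agg_snr_def by simp

lemma nu_hat_reduction_subadditive:
  assumes "V > 0" "a \<ge> 0"
  shows "V - nu_hat V (real r * a) \<le> real r * (V - nu_hat V a)"
proof (cases "r = 0")
  case True
  then show ?thesis by (simp add: nu_hat_def)
next
  case False
  have pos: "1 + V * a > 0" "1 + V * (real r * a) > 0"
    using assms by (simp_all add: add_pos_nonneg)
  have "1 + V * a \<le> 1 + V * (real r * a)"
    using assms False by (simp add: mult_left_mono mult_le_cancel_right1)
  then have "V * V * real r * a / (1 + V * (real r * a)) \<le> V * V * real r * a / (1 + V * a)"
    using assms pos by (intro divide_left_mono) auto
  with pos show ?thesis unfolding nu_hat_def by (simp add: field_simps)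
qed

lemma nu_hat_agg_snr_has_real_derivative:
  assumes "S > 0" "SA > 0" "V > 0"
  shows "((\<lambda>s. nu_hat V (agg_snr SA s r)) has_real_derivative
           - ((nu_hat V (agg_snr SA S r))\<^sup>2 * (real r * SA\<^sup>2 / (SA + S)\<^sup>2))) (at S)"
proof -
  have "SA + S > 0" "SA + S + V * (real r * SA * S) > 0"
    using assms by (auto intro!: add_pos_nonneg)
  then show ?thesis
    unfolding nu_hat_def agg_snr_def
    by (auto intro!: derivative_eq_intros simp: field_simps power2_eq_square)
qed

definition one_report_gain :: "real \<Rightarrow> real \<Rightarrow> real \<Rightarrow> real" where
  "one_report_gain SA S V = V - nu_hat V (agg_snr SA S 1)"

lemma one_report_gain_eq:
  assumes "S > 0" "SA > 0" "V > 0"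
  shows "one_report_gain SA S V = V\<^sup>2 / (1/S + 1/SA + V)"
proof -
  have "1/S + 1/SA + V > 0" "SA + S + V * (SA * S) > 0"
    using assms by (simp_all add: add_pos_pos)
  with assms show ?thesis
    unfolding one_report_gain_def nu_hat_def agg_snr_def by (simp add: field_simps power2_eq_square)
qed

lemma f_obj_zeta_zero: "f_obj lam theta SA B 0 s V = V"
proof -
  have "(\<Sum>r = 0..B. binom_B B r (rho 0) * nu_hat V (agg_snr SA s r))
      = (\<Sum>r = 0..B. if r = 0 then V else 0)"
    by (rule sum.cong) (auto simp: binom_B_zero nu_hat_def agg_snr_def)
  then show ?thesis unfolding f_obj_def by simp
qed

lemma f_obj_SM_zero: "f_obj lam theta SA B z 0 V = V + lam * z * real B"
proof -
  have "(\<Sum>r = 0..B. binom_B B r (rho z) * nu_hat V (agg_snr SA 0 r))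
      = (\<Sum>r = 0..B. binom_B B r (rho z)) * V"
    unfolding sum_distrib_right by (simp add: agg_snr_def nu_hat_def)
  then show ?thesis unfolding f_obj_def by (simp add: sum_binom_B)
qed

lemma f_obj_ge:
  assumes "V > 0" "SA > 0" "S \<ge> 0" "z \<ge> 0"
  shows "f_obj lam theta SA B z S V
    \<ge> V - real B * rho z * one_report_gain SA S V + lam * z * real B * (1 + theta * S)"
proof -
  let ?a = "agg_snr SA S 1"
  have p: "0 \<le> rho z" "rho z \<le> 1"
    using assms rho_nonneg rho_less_one less_imp_le by auto
  have "V - nu_hat V (agg_snr SA S r) \<le> real r * (V - nu_hat V ?a)" for r
    using nu_hat_reduction_subadditive[OF assms(1) agg_snr_nonneg[OF assms(2,3)], of r]
    by (simp only: agg_snr_eq_mult[of SA S r])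
  then have "V - (\<Sum>r = 0..B. binom_B B r (rho z) * nu_hat V (agg_snr SA S r))
      \<le> (\<Sum>r = 0..B. binom_B B r (rho z) * real r * (V - nu_hat V ?a))"
    unfolding sum_binom_B_diff [symmetric] using binom_B_nonneg[OF p]
    by (intro sum_mono) (simp add: mult.assoc mult_left_mono)
  also have "\<dots> = real B * rho z * one_report_gain SA S V"
    by (simp add: one_report_gain_def sum_binom_B_mult_of_nat flip: sum_distrib_right)
  finally show ?thesis unfolding f_obj_def by simp
qed

lemma f_obj_gt_V:
  fixes B :: nat
  assumes "V > 0" "SA > 0" "S \<ge> 0" "z > 0" "lam > 0" "theta > 0" "B \<ge> 1"
    and gain: "one_report_gain SA S V \<le> lam * (1 + theta * S)"
  shows "f_obj lam theta SA B z S V > V"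
proof -
  have cost: "lam * (1 + theta * S) > 0"
    using assms by (simp add: add_pos_nonneg)
  have "real B * rho z * one_report_gain SA S V \<le> real B * rho z * (lam * (1 + theta * S))"
    using gain rho_nonneg[of z] assms by (intro mult_left_mono) auto
  also have "\<dots> < real B * z * (lam * (1 + theta * S))"
    using rho_less[of z] cost assms by (intro mult_strict_right_mono) auto
  finally have "real B * rho z * one_report_gain SA S V < lam * z * real B * (1 + theta * S)"
    by (simp add: mult_ac)
  then show ?thesis
    using f_obj_ge[OF assms(1-3) less_imp_le[OF assms(4)], where lam = lam and theta = theta and B = B]
    by linarith
qed

text \<open>Only the term \<open>r = 1\<close> of \<open>f\<close> is needed: its weight is \<open>B\<zeta> e\<^sup>-\<^sup>\<zeta>(1 - \<rho>(\<zeta>))\<^sup>B\<^sup>-\<^sup>1 \<sim> B\<zeta>\<close>.\<close>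

lemma f_obj_less_V_near_zero:
  assumes "V > 0" "SA > 0" "S > 0" "B \<ge> 1" "lam > 0"
    and gain: "one_report_gain SA S V > lam * (1 + theta * S)"
  shows "\<exists>z>0. f_obj lam theta SA B z S V < V"
proof -
  define D where "D = one_report_gain SA S V"
  define w where "w = (\<lambda>z::real. exp (- z) * (1 - rho z) ^ (B - 1) * D)"
  have "isCont w 0"
    unfolding w_def rho_def by (intro continuous_intros)
  then have "(w \<longlongrightarrow> D) (at_right 0)"
    unfolding isCont_def filterlim_at_split by (simp add: w_def)
  then have "eventually (\<lambda>z. lam * (1 + theta * S) < w z \<and> 0 < z) (at_right 0)"
    using gain unfolding D_def by (intro eventually_conj order_tendstoD(1) eventually_at_right_less)
  then obtain z where z: "w z > lam * (1 + theta * S)" "z > 0"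
    using eventually_happens by force
  have p: "0 \<le> rho z" "rho z \<le> 1"
    using z rho_nonneg rho_less_one less_imp_le by auto
  have "real B * z * w z = binom_B B 1 (rho z) * D"
    unfolding binom_B_def w_def rho_def using assms by simp
  also have "\<dots> \<le> (\<Sum>r = 0..B. binom_B B r (rho z) * (V - nu_hat V (agg_snr SA S r)))"
    unfolding D_def one_report_gain_def
    using assms binom_B_nonneg[OF p] nu_hat_le[OF assms(1) agg_snr_nonneg]
    by (intro member_le_sum) auto
  finally have "(\<Sum>r = 0..B. binom_B B r (rho z) * nu_hat V (agg_snr SA S r)) \<le> V - real B * z * w z"
    by (simp add: sum_binom_B_diff)
  moreover have "real B * z * w z > lam * z * real B * (1 + theta * S)"
    using z assms by (simp add: mult_ac)
  ultimately have "f_obj lam theta SA B z S V < V"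
    unfolding f_obj_def by linarith
  with z show ?thesis by blast
qed

lemma sqrt_add_sqrt_square_le:
  assumes "S > 0" "a > 0" "c > 0"
  shows "(sqrt a + sqrt c)\<^sup>2 \<le> (1 + a * S) * (1/S + c)"
proof -
  define t where "t = sqrt a * sqrt c"
  have "(1 + a * S) * (1/S + c) - (sqrt a + sqrt c)\<^sup>2 = (1 - t * S)\<^sup>2 / S"
    using assms unfolding t_def by (simp add: field_simps power2_eq_square)
  moreover have "(1 - t * S)\<^sup>2 / S \<ge> 0" using assms by simp
  ultimately show ?thesis by linarith
qed

lemma sqrt_add_sqrt_square_eq:
  assumes "a > 0" "c > 0"
  defines "S \<equiv> 1 / (sqrt a * sqrt c)"
  shows "(sqrt a + sqrt c)\<^sup>2 = (1 + a * S) * (1/S + c)"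
proof -
  have "sqrt a > 0" "sqrt c > 0" "(sqrt a)\<^sup>2 = a" "(sqrt c)\<^sup>2 = c"
    using assms by auto
  then show ?thesis unfolding S_def by (simp add: field_simps power2_eq_square)
qed

text \<open>\<open>v\<^sub>t\<^sub>h\<close> is the fixed point of \<open>V \<mapsto> \<surd>\<lambda>(\<surd>\<theta> + \<surd>(1/S\<^sub>A + V))\<close>: with \<open>s = \<surd>(\<lambda>\<theta>)\<close>,
  \<open>m = s + \<lambda>/2\<close>, both \<open>(V - m)\<^sup>2 - (v\<^sub>t\<^sub>h - m)\<^sup>2\<close> and \<open>(V - s)\<^sup>2 - \<lambda>(1/S\<^sub>A + V)\<close> are the
  same quadratic in \<open>V\<close>.\<close>

lemma le_add_iff_less_or_square_le:
  fixes x m w :: real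
  assumes "w \<ge> 0"
  shows "x \<le> m + w \<longleftrightarrow> x < m \<or> (x - m)\<^sup>2 \<le> w\<^sup>2"
  using assms power2_le_iff_abs_le[OF assms, of "x - m"] by (auto simp: abs_if)

lemma le_v_th_iff:
  assumes lam: "lam > 0" and th: "theta > 0" and SA: "SA > 0" and V: "V > 0"
  shows "V \<le> v_th lam theta SA \<longleftrightarrow> V \<le> sqrt lam * (sqrt theta + sqrt (1/SA + V))"
proof -
  define s where "s = sqrt (lam * theta)"
  define u where "u = sqrt lam * sqrt (1/SA + V)"
  define m where "m = s + lam / 2"
  define w where "w = sqrt lam * sqrt (s + lam / 4 + 1 / SA)"
  have s0: "s \<ge> 0" and u0: "u \<ge> 0" and w0: "w \<ge> 0"
    unfolding s_def u_def w_def using lam th SA V by auto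
  have vt: "v_th lam theta SA = m + w" unfolding v_th_def m_def w_def s_def by simp
  have su: "sqrt lam * (sqrt theta + sqrt (1/SA + V)) = s + u"
    unfolding s_def u_def by (simp add: algebra_simps real_sqrt_mult)
  have w2: "w\<^sup>2 = lam * (s + lam / 4 + 1 / SA)" and u2: "u\<^sup>2 = lam * (1/SA + V)"
    unfolding w_def u_def using lam s0 SA V by (simp_all add: power_mult_distrib)
  have ident: "(V - m)\<^sup>2 - w\<^sup>2 = (V - s)\<^sup>2 - u\<^sup>2"
    unfolding w2 u2 m_def by (simp add: power2_eq_square algebra_simps)
  have "(lam / 2)\<^sup>2 \<le> w\<^sup>2"
    unfolding w2 using lam s0 SA by (simp add: power2_eq_square algebra_simps)
  then have wl: "lam / 2 \<le> w" using w0 power2_le_imp_le by blast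
  have "V \<le> m + w \<longleftrightarrow> V < m \<or> (V - m)\<^sup>2 \<le> w\<^sup>2"
    by (rule le_add_iff_less_or_square_le[OF w0])
  also have "\<dots> \<longleftrightarrow> V < s \<or> (V - s)\<^sup>2 \<le> u\<^sup>2"
  proof -
    have "(V - m)\<^sup>2 \<le> w\<^sup>2" if "s \<le> V" "V < m"
      using that wl power2_le_iff_abs_le[OF w0, of "V - m"] unfolding m_def by auto
    moreover have "(V - m)\<^sup>2 \<le> w\<^sup>2 \<longleftrightarrow> (V - s)\<^sup>2 \<le> u\<^sup>2"
      using ident by linarith
    moreover have "s < m" unfolding m_def using lam by simp
    ultimately show ?thesis by (cases "s \<le> V") auto
  qed
  also have "\<dots> \<longleftrightarrow> V \<le> s + u"
    by (rule le_add_iff_less_or_square_le[OF u0, symmetric])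
  finally show ?thesis unfolding vt su .
qed

lemma one_report_gain_le_cost:
  assumes lam: "lam > 0" and th: "theta > 0" and SA: "SA > 0" and V: "V > 0" and S: "S \<ge> 0"
    and below: "V \<le> v_th lam theta SA"
  shows "one_report_gain SA S V \<le> lam * (1 + theta * S)"
proof (cases "S = 0")
  case True
  then show ?thesis using lam by (simp add: one_report_gain_def nu_hat_def agg_snr_def)
next
  case False
  then have S0: "S > 0" using S by simp
  define c where "c = 1/SA + V"
  have c0: "c > 0" "1/S + c > 0" unfolding c_def using SA V S0 by (simp_all add: add_pos_pos)
  have "V\<^sup>2 \<le> (sqrt lam * (sqrt theta + sqrt c))\<^sup>2"
    using le_v_th_iff[OF lam th SA V] below V unfolding c_def by (simp add: power_mono)
  also have "\<dots> = lam * (sqrt theta + sqrt c)\<^sup>2"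
    using lam by (simp add: power_mult_distrib)
  also have "\<dots> \<le> lam * (1 + theta * S) * (1/S + c)"
    using sqrt_add_sqrt_square_le[OF S0 th c0(1)] lam by simp
  finally show ?thesis
    using one_report_gain_eq[OF S0 SA V] c0 unfolding c_def by (simp add: divide_le_eq add.assoc)
qed

lemma ex_one_report_gain_gt_cost:
  assumes lam: "lam > 0" and th: "theta > 0" and SA: "SA > 0" and V: "V > 0"
    and above: "V > v_th lam theta SA"
  shows "\<exists>S>0. one_report_gain SA S V > lam * (1 + theta * S)"
proof -
  define c where "c = 1/SA + V"
  define S where "S = 1 / (sqrt theta * sqrt c)"
  have c0: "c > 0" unfolding c_def using SA V by (simp add: add_pos_pos)
  have S0: "S > 0" unfolding S_def using th c0 by simp
  have "(sqrt lam * (sqrt theta + sqrt c))\<^sup>2 < V\<^sup>2"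
    using le_v_th_iff[OF lam th SA V] above lam th c0 unfolding c_def
    by (intro power_strict_mono) auto
  moreover have "(sqrt lam * (sqrt theta + sqrt c))\<^sup>2 = lam * (1 + theta * S) * (1/S + c)"
    using sqrt_add_sqrt_square_eq[OF th c0] lam unfolding S_def by (simp add: power_mult_distrib)
  moreover have "1/S + c > 0" using S0 c0 by (simp add: add_pos_pos)
  ultimately have "one_report_gain SA S V > lam * (1 + theta * S)"
    using one_report_gain_eq[OF S0 SA V] unfolding c_def by (simp add: less_divide_eq add.assoc)
  with S0 show ?thesis by blast
qed

lemma f_obj_has_derivative_SM:
  assumes "S > 0" "SA > 0" "V > 0"
  shows "((\<lambda>s. f_obj lam theta SA B z s V) has_real_derivative h_fun lam theta SA B S z V) (at S)"
proof -
  have "((\<lambda>s. \<Sum>r = 0..B. binom_B B r (rho z) * nu_hat V (agg_snr SA s r)) has_real_derivative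
      (\<Sum>r = 0..B. binom_B B r (rho z) *
        - ((nu_hat V (agg_snr SA S r))\<^sup>2 * (real r * SA\<^sup>2 / (SA + S)\<^sup>2)))) (at S)"
    by (intro DERIV_sum DERIV_cmult nu_hat_agg_snr_has_real_derivative[OF assms])
  moreover have "((\<lambda>s. lam * z * real B * (1 + theta * s)) has_real_derivative lam * z * real B * theta) (at S)"
    by (auto intro!: derivative_eq_intros)
  ultimately have "((\<lambda>s. f_obj lam theta SA B z s V) has_real_derivative
      (\<Sum>r = 0..B. binom_B B r (rho z) *
        - ((nu_hat V (agg_snr SA S r))\<^sup>2 * (real r * SA\<^sup>2 / (SA + S)\<^sup>2))) + lam * z * real B * theta) (at S)"
    unfolding f_obj_def [abs_def] by (rule DERIV_add)
  then show ?thesis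
    unfolding h_fun_def by (simp add: sum_negf)
qed

lemma f_obj_has_derivative_zeta:
  assumes "z > 0"
  shows "((\<lambda>x. f_obj lam theta SA B x S V) has_real_derivative
     exp (- z) * (1 - z) * (\<Sum>r = 0..B. binom_B B r (rho z) *
          (nu_hat V (agg_snr SA S r) * ((real r - rho z * real B) / (rho z * (1 - rho z)))))
     + lam * real B * (1 + theta * S)) (at z)"
proof -
  have "((\<lambda>x. binom_B B r (rho x)) has_real_derivative
      binom_B B r (rho z) * ((real r - rho z * real B) / (rho z * (1 - rho z))) * (exp (- z) * (1 - z)))
      (at z)" if "r \<le> B" for r
    using DERIV_chain2[OF binom_B_has_real_derivative rho_has_real_derivative]
      rho_pos[OF assms] rho_less_one that by blast
  then have "((\<lambda>x. \<Sum>r = 0..B. binom_B B r (rho x) * nu_hat V (agg_snr SA S r)) has_real_derivative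
      (\<Sum>r = 0..B. binom_B B r (rho z) * ((real r - rho z * real B) / (rho z * (1 - rho z)))
        * (exp (- z) * (1 - z)) * nu_hat V (agg_snr SA S r))) (at z)"
    by (intro DERIV_sum DERIV_cmult_right) simp
  moreover have "((\<lambda>x. lam * x * real B * (1 + theta * S)) has_real_derivative
      lam * real B * (1 + theta * S)) (at z)"
    by (auto intro!: derivative_eq_intros)
  ultimately have "((\<lambda>x. f_obj lam theta SA B x S V) has_real_derivative
      (\<Sum>r = 0..B. binom_B B r (rho z) * ((real r - rho z * real B) / (rho z * (1 - rho z)))
        * (exp (- z) * (1 - z)) * nu_hat V (agg_snr SA S r)) + lam * real B * (1 + theta * S)) (at z)"
    unfolding f_obj_def [abs_def] by (rule DERIV_add)
  then show ?thesis by (simp add: sum_distrib_left mult_ac)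
qed

lemma quadratic_neg_between_roots:
  fixes A b c x :: real
  assumes A: "A > 0" and neg: "A * x\<^sup>2 + b * x + c < 0"
  shows "(- b - sqrt (b\<^sup>2 - 4 * A * c)) / (2 * A) \<le> x \<and> x \<le> (- b + sqrt (b\<^sup>2 - 4 * A * c)) / (2 * A)"
proof -
  have "(2 * A * x + b)\<^sup>2 = 4 * A * (A * x\<^sup>2 + b * x + c) + (b\<^sup>2 - 4 * A * c)"
    by (simp add: power2_eq_square algebra_simps)
  also have "\<dots> < b\<^sup>2 - 4 * A * c" using A neg by (simp add: mult_pos_neg)
  finally have "\<bar>2 * A * x + b\<bar> < sqrt (b\<^sup>2 - 4 * A * c)"
    using real_sqrt_less_mono by fastforce
  with A show ?thesis by (simp add: divide_le_eq le_divide_eq algebra_simps abs_less_iff)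
qed

lemma SM_between_roots:
  assumes lam: "lam > 0" and th: "theta > 0" and SA: "SA > 0" and V: "V > 0" and S: "S > 0"
    and gain: "one_report_gain SA S V > lam * (1 + theta * S)"
  shows "SM_th_min lam theta SA V \<le> S \<and>
    S \<le> (- lam * theta * SA - lam * (1 + V * SA) + V\<^sup>2 * SA) / (2 * lam * theta * (1 + V * SA))
          + sqrt (((lam * theta + V\<^sup>2) - lam * (1 / SA + V))\<^sup>2 - 4 * lam * theta * V\<^sup>2)
            / (2 * lam * theta * (1 / SA + V))"
proof -
  define A where "A = lam * theta * (1 + V * SA)"
  define b where "b = lam * theta * SA + lam * (1 + V * SA) - V\<^sup>2 * SA"
  define c where "c = lam * SA"
  define D where "D = b\<^sup>2 - 4 * A * c"
  have A0: "A > 0" unfolding A_def using lam th SA V by (simp add: add_pos_pos)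
  have X: "1/S + 1/SA + V > 0" using S SA V by (simp add: add_pos_pos)
  have "V\<^sup>2 > lam * (1 + theta * S) * (1/S + 1/SA + V)"
    using gain one_report_gain_eq[OF S SA V] X by (simp add: less_divide_eq)
  then have "V\<^sup>2 * (S * SA) > lam * (1 + theta * S) * (1/S + 1/SA + V) * (S * SA)"
    using S SA by (simp add: mult_strict_right_mono)
  also have "lam * (1 + theta * S) * (1/S + 1/SA + V) * (S * SA)
      = lam * (1 + theta * S) * (SA + S + V * SA * S)"
    using S SA by (simp add: field_simps)
  finally have "A * S\<^sup>2 + b * S + c < 0"
    unfolding A_def b_def c_def by (simp add: power2_eq_square algebra_simps)
  note roots = quadratic_neg_between_roots[OF A0 this]
  have D1: "((lam * theta + V\<^sup>2) * SA - lam * (1 + V * SA))\<^sup>2 - 4 * lam * theta * V\<^sup>2 * SA\<^sup>2 = D"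
    unfolding D_def A_def b_def c_def by (simp add: power2_eq_square algebra_simps)
  have D2: "((lam * theta + V\<^sup>2) - lam * (1 / SA + V))\<^sup>2 - 4 * lam * theta * V\<^sup>2 = D / SA\<^sup>2"
    unfolding D_def A_def b_def c_def using SA by (simp add: power2_eq_square field_simps)
  have nb: "- lam * theta * SA - lam * (1 + V * SA) + V\<^sup>2 * SA = - b"
    unfolding b_def by simp
  have A2: "2 * lam * theta * (1 + V * SA) = 2 * A"
    unfolding A_def by simp
  have A2': "2 * lam * theta * (1 / SA + V) = 2 * A / SA"
    unfolding A_def using SA by (simp add: field_simps)
  show ?thesis
    using roots SA A0 unfolding SM_th_min_def D1 D2 nb A2 A2' D_def [symmetric]
    by (simp add: real_sqrt_divide add_divide_distrib diff_divide_distrib)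
qed

locale myopic_minimizer =
  fixes lam theta SA :: real and B :: nat and V zeta SM :: real
  assumes SA_pos: "SA > 0" and theta_pos: "theta > 0" and lam_pos: "lam > 0"
    and B_pos: "B \<ge> 1" and V_pos: "V > 0"
    and zeta_nonneg: "zeta \<ge> 0" and SM_nonneg: "SM \<ge> 0"
    and minimal: "\<And>z s. z \<ge> 0 \<Longrightarrow> s \<ge> 0 \<Longrightarrow>
                    f_obj lam theta SA B zeta SM V \<le> f_obj lam theta SA B z s V"
begin

lemma f_obj_min_le_V: "f_obj lam theta SA B zeta SM V \<le> V"
  using minimal[of 0 0] f_obj_zeta_zero[of lam theta SA B 0 V] by simp

lemma cost_pos: "lam * real B * (1 + theta * SM) > 0"
  using lam_pos B_pos theta_pos SM_nonneg by (simp add: add_pos_nonneg)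

lemma one_report_gain_gt_cost:
  assumes "zeta > 0"
  shows "one_report_gain SA SM V > lam * (1 + theta * SM)"
  using f_obj_gt_V[OF V_pos SA_pos SM_nonneg assms lam_pos theta_pos B_pos] f_obj_min_le_V
  by fastforce

lemma zeta_eq_zero_if_le_v_th:
  assumes "V \<le> v_th lam theta SA"
  shows "zeta = 0"
  using one_report_gain_gt_cost zeta_nonneg
    one_report_gain_le_cost[OF lam_pos theta_pos SA_pos V_pos SM_nonneg assms]
  by fastforce

lemma zeta_pos_if_gt_v_th:
  assumes "V > v_th lam theta SA"
  shows "zeta > 0"
proof (rule ccontr)
  assume "\<not> zeta > 0"
  then have f_V: "f_obj lam theta SA B zeta SM V = V"
    using zeta_nonneg f_obj_zeta_zero by (metis order_less_le)
  obtain S where "S > 0" "one_report_gain SA S V > lam * (1 + theta * S)"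
    using ex_one_report_gain_gt_cost[OF lam_pos theta_pos SA_pos V_pos assms] by blast
  then obtain z where "z > 0" "f_obj lam theta SA B z S V < V"
    using f_obj_less_V_near_zero[OF V_pos SA_pos _ B_pos lam_pos] by blast
  with \<open>S > 0\<close> show False using minimal[of z S] f_V by simp
qed

lemma SM_pos:
  assumes "zeta > 0"
  shows "SM > 0"
proof (rule ccontr)
  assume "\<not> SM > 0"
  then have "f_obj lam theta SA B zeta SM V = V + lam * zeta * real B"
    using SM_nonneg f_obj_SM_zero by (metis order_less_le)
  moreover have "lam * zeta * real B > 0"
    using lam_pos assms B_pos by simp
  ultimately show False using f_obj_min_le_V by simp
qed

lemma stationary_zeta:
  assumes "zeta > 0"
  shows "exp (- zeta) * (1 - zeta) * (\<Sum>r = 0..B. binom_B B r (rho zeta) *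
          (nu_hat V (agg_snr SA SM r) * ((real r - rho zeta * real B) / (rho zeta * (1 - rho zeta)))))
     + lam * real B * (1 + theta * SM) = 0"
proof -
  have "\<forall>y. \<bar>zeta - y\<bar> < zeta \<longrightarrow> f_obj lam theta SA B zeta SM V \<le> f_obj lam theta SA B y SM V"
    using minimal SM_nonneg by (auto simp: abs_if split: if_splits)
  then show ?thesis using DERIV_local_min[OF f_obj_has_derivative_zeta[OF assms] assms] by blast
qed

text \<open>\<open>\<zeta> = 1\<close> is excluded by stationarity; \<open>\<zeta> > 1\<close> because \<open>\<rho>\<close> already takes the value
  \<open>\<rho>(\<zeta>)\<close> on \<open>[0, 1]\<close>, at lower cost.\<close>

lemma zeta_less_one:
  assumes "zeta > 0"
  shows "zeta < 1"
proof -
  have "zeta \<noteq> 1"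
    using stationary_zeta[OF assms] cost_pos by auto
  moreover have "\<not> zeta > 1"
  proof
    assume "zeta > 1"
    have "rho 0 \<le> rho zeta" "rho zeta \<le> rho 1" "\<forall>x. 0 \<le> x \<and> x \<le> 1 \<longrightarrow> isCont rho x"
      using rho_nonneg[of zeta] assms rho_le_rho_one unfolding rho_def [abs_def]
      by (auto intro!: continuous_intros)
    then obtain x where x: "0 \<le> x" "x \<le> 1" "rho x = rho zeta"
      using IVT[of rho 0 "rho zeta" 1] by auto
    then have "f_obj lam theta SA B x SM V
        = f_obj lam theta SA B zeta SM V - (zeta - x) * (lam * real B * (1 + theta * SM))"
      unfolding f_obj_def by (simp add: algebra_simps)
    moreover have "(zeta - x) * (lam * real B * (1 + theta * SM)) > 0"
      using x \<open>zeta > 1\<close> cost_pos by simp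
    ultimately show False using minimal[of x SM] x SM_nonneg by simp
  qed
  ultimately show ?thesis by linarith
qed

lemma g_fun_eq_zero:
  assumes "zeta > 0"
  shows "g_fun lam theta SA B SM zeta V = 0"
proof -
  let ?A = "\<Sum>r = 0..B. binom_B B r (rho zeta) *
          (nu_hat V (agg_snr SA SM r) * ((real r - rho zeta * real B) / (rho zeta * (1 - rho zeta))))"
  define P where "P = exp (- zeta) * (1 - zeta)"
  define X where "X = lam * real B * (1 + theta * SM)"
  have "P > 0" unfolding P_def using zeta_less_one[OF assms] by simp
  then have solve: "\<And>a. P * a + X = 0 \<Longrightarrow> a = - X / P" by (simp add: field_simps)
  have "exp zeta / (1 - zeta) = 1 / P"
    using zeta_less_one[OF assms] unfolding P_def by (simp add: exp_minus field_simps)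
  then have "g_fun lam theta SA B SM zeta V = ?A + X / P"
    unfolding g_fun_def X_def by simp
  moreover have "?A = - X / P"
    using stationary_zeta[OF assms] unfolding P_def [symmetric] X_def [symmetric] by (rule solve)
  ultimately show ?thesis by simp
qed

lemma h_fun_eq_zero:
  assumes "zeta > 0"
  shows "h_fun lam theta SA B SM zeta V = 0"
proof -
  have "\<forall>y. \<bar>SM - y\<bar> < SM \<longrightarrow> f_obj lam theta SA B zeta SM V \<le> f_obj lam theta SA B zeta y V"
    using minimal zeta_nonneg by (auto simp: abs_if split: if_splits)
  then show ?thesis
    using DERIV_local_min[OF f_obj_has_derivative_SM[OF SM_pos SA_pos V_pos] SM_pos] assms
    by blast
qed

lemma exp_zeta_mult_le:
  assumes "zeta > 0"
  shows "exp zeta * (lam * theta) \<le> (V * SA / (SA + SM))\<^sup>2"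
proof -
  let ?q = "(V * SA / (SA + SM))\<^sup>2"
  have p: "0 \<le> rho zeta" "rho zeta \<le> 1"
    using zeta_nonneg rho_nonneg rho_less_one less_imp_le by auto
  have "lam * zeta * real B * theta = (\<Sum>r = 0..B. binom_B B r (rho zeta) *
          ((nu_hat V (agg_snr SA SM r))\<^sup>2 * (real r * SA\<^sup>2 / (SA + SM)\<^sup>2)))"
    using h_fun_eq_zero[OF assms] unfolding h_fun_def by simp
  also have "\<dots> \<le> (\<Sum>r = 0..B. binom_B B r (rho zeta) * real r * ?q)"
  proof (rule sum_mono)
    fix r
    have "(nu_hat V (agg_snr SA SM r))\<^sup>2 \<le> V\<^sup>2"
      using nu_hat_nonneg nu_hat_le V_pos agg_snr_nonneg[OF SA_pos SM_nonneg] by (simp add: power_mono)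
    then have "(nu_hat V (agg_snr SA SM r))\<^sup>2 * (real r * SA\<^sup>2 / (SA + SM)\<^sup>2)
        \<le> V\<^sup>2 * (real r * SA\<^sup>2 / (SA + SM)\<^sup>2)"
      by (rule mult_right_mono) simp
    then have "binom_B B r (rho zeta) * ((nu_hat V (agg_snr SA SM r))\<^sup>2 * (real r * SA\<^sup>2 / (SA + SM)\<^sup>2))
        \<le> binom_B B r (rho zeta) * (V\<^sup>2 * (real r * SA\<^sup>2 / (SA + SM)\<^sup>2))"
      by (rule mult_left_mono) (rule binom_B_nonneg[OF p])
    also have "\<dots> = binom_B B r (rho zeta) * real r * ?q"
      by (simp add: power_divide power_mult_distrib)
    finally show "binom_B B r (rho zeta) * ((nu_hat V (agg_snr SA SM r))\<^sup>2 * (real r * SA\<^sup>2 / (SA + SM)\<^sup>2))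
        \<le> binom_B B r (rho zeta) * real r * ?q" .
  qed
  also have "\<dots> = (\<Sum>r = 0..B. binom_B B r (rho zeta) * real r) * ?q"
    by (rule sum_distrib_right [symmetric])
  also have "\<dots> = (real B * zeta) * (exp (- zeta) * ?q)"
    by (simp add: sum_binom_B_mult_of_nat rho_def)
  finally have "lam * theta \<le> exp (- zeta) * ?q"
    using B_pos assms by (simp add: mult_ac)
  then have "exp zeta * (lam * theta) \<le> exp zeta * (exp (- zeta) * ?q)"
    by (rule mult_left_mono) simp
  also have "exp zeta * (exp (- zeta) * ?q) = ?q"
    by (simp add: exp_minus)
  finally show ?thesis .
qed

lemma zeta_less_two_ln:
  assumes "zeta > 0"
  shows "zeta < 2 * ln (V / sqrt (lam * theta))"
proof -
  define y where "y = V / sqrt (lam * theta)"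
  have lt: "lam * theta > 0" using lam_pos theta_pos by simp
  then have y: "y > 0" "y\<^sup>2 = V\<^sup>2 / (lam * theta)"
    unfolding y_def using V_pos by (simp_all add: power_divide)
  have "V * SA / (SA + SM) < V"
    using V_pos SA_pos SM_pos[OF assms] by (simp add: divide_less_eq)
  then have "(V * SA / (SA + SM))\<^sup>2 < V\<^sup>2"
    using V_pos SA_pos SM_nonneg by (intro power_strict_mono) auto
  then have "exp zeta * (lam * theta) < V\<^sup>2"
    using exp_zeta_mult_le[OF assms] by linarith
  then have "exp zeta < y\<^sup>2"
    unfolding y(2) using lt by (simp add: less_divide_eq)
  also have "y\<^sup>2 = exp (2 * ln y)"
    using y(1) ln_realpow[of y 2] exp_ln[of "y\<^sup>2"] by simp
  finally show ?thesis unfolding y_def by simp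
qed

lemma SM_le_SA_mult:
  assumes "zeta > 0"
  shows "SM \<le> SA * (V / sqrt (lam * theta) - 1)"
proof -
  have lt: "lam * theta > 0" using lam_pos theta_pos by simp
  have "1 < exp zeta" using assms by simp
  from mult_strict_right_mono[OF this lt] have "lam * theta < exp zeta * (lam * theta)" by simp
  also have "\<dots> \<le> (V * SA / (SA + SM))\<^sup>2" by (rule exp_zeta_mult_le[OF assms])
  finally have "sqrt (lam * theta) < sqrt ((V * SA / (SA + SM))\<^sup>2)"
    by (rule real_sqrt_less_mono)
  then have "sqrt (lam * theta) < V * SA / (SA + SM)"
    using V_pos SA_pos SM_nonneg by simp
  moreover have "sqrt (lam * theta) > 0" using lt by simp
  ultimately show ?thesis
    using SA_pos SM_nonneg by (simp add: less_divide_eq le_divide_eq algebra_simps)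
qed

lemma SM_th_bounds:
  assumes "zeta > 0"
  shows "SM_th_min lam theta SA V \<le> SM \<and> SM \<le> SM_th_max lam theta SA V"
  using SM_between_roots[OF lam_pos theta_pos SA_pos V_pos SM_pos[OF assms] one_report_gain_gt_cost[OF assms]]
    SM_le_SA_mult[OF assms]
  unfolding SM_th_max_def by simp

end

theorem theorem3:
  fixes SA cTX phi theta lam V zeta SM :: real and B :: nat
  assumes SA_pos: "SA > 0" and cTX_pos: "cTX > 0" and phi_pos: "phi > 0"
    and theta_def: "theta = phi / cTX"
    and B_ge: "B \<ge> 1"
    and lam_pos: "0 < lam" and lam_lt: "lam < lam_th theta SA"
    and V_pos: "0 < V" and V_le: "V \<le> 1"
    and feas: "zeta \<ge> 0" "SM \<ge> 0"
    and conv: "zeta = 0 \<longrightarrow> SM = 0"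
    and minimizer: "\<And>z s. z \<ge> 0 \<Longrightarrow> s \<ge> 0 \<Longrightarrow>
                      f_obj lam theta SA B zeta SM V \<le> f_obj lam theta SA B z s V"
  shows "(V \<le> v_th lam theta SA \<longrightarrow> zeta = 0 \<and> SM = 0)
       \<and> (V > v_th lam theta SA \<longrightarrow>
            0 < zeta \<and> zeta < 1 \<and> SM > 0
          \<and> h_fun lam theta SA B SM zeta V = 0
          \<and> g_fun lam theta SA B SM zeta V = 0
          \<and> zeta < min 1 (2 * ln (V / sqrt (lam * theta)))
          \<and> SM_th_min lam theta SA V \<le> SM
          \<and> SM \<le> SM_th_max lam theta SA V)"
proof -
  have "theta > 0" using theta_def phi_pos cTX_pos by simp
  then interpret myopic_minimizer lam theta SA B V zeta SM
    using SA_pos lam_pos B_ge V_pos feas minimizer by unfold_locales simp_all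
  show ?thesis
    using zeta_eq_zero_if_le_v_th conv zeta_pos_if_gt_v_th zeta_less_one SM_pos
      h_fun_eq_zero g_fun_eq_zero zeta_less_two_ln SM_th_bounds
    by auto
qed

end
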